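(* Consider the two-stage robust problem $\min_{x\in\mathcal X}c_1x+\max_{u\in\mathcal U(x)}\min_{y\in\mathcal Y(x,u)}c_2y$ with decision-dependent uncertainty set $\mathcal U(x)=\{u\in\mathbb R^{n_u}_+: x_{li}\le u_i\le x_{hi},\ i=1,\dots,n_u\}$, where $x_l=(x_{l1},\dots,x_{ln_u})$ and $x_h=(x_{h1},\dots,x_{hn_u})$ are subvectors of the first-stage variables, and $\mathcal U(x)\ne\emptyset$ for all $x\in\mathcal X$. Then it is equivalent to $\min_{x\in\mathcal X}c_1x+\max_{u\in\mathcal U^0}\min_{y\in\mathcal Y'(x,u)}c_2y$, where $\mathcal U^0=[0,1]^{n_u}$ and $\mathcal Y'(x,u)=\{y\in\mathbb Z^{m_y}_+\times\mathbb R^{n_y}_+: B_2y\ge d-B_1x-E(x_l+u\circ(x_h-x_l))\}$.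
   Context: $\mathcal X=\{x\in\mathbb Z^{m_x}_+\times\mathbb R^{n_x}_+: Ax\ge b\}$, $\mathcal Y(x,u)=\{y\in\mathbb Z^{m_y}_+\times\mathbb R^{n_y}_+: B_2y\ge d-B_1x-Eu\}$, $\circ$ is the componentwise product. The optimal value of an infeasible minimization (maximization) problem is $+\infty$ ($-\infty$). Two formulations are called equivalent if they have the same optimal value and any optimal first-stage solution of one is optimal for the other, and vice versa. *)

theory Defs
  imports "HOL-Analysis.Analysis"
begin

text \<open>Vectors are indexed by finite types. A set IX of coordinates is required to be
integral (the Z_+ part), the remaining coordinates are continuous (the R_+ part).\<close>

definition first_stage_set ::
  "real^'n^'m \<Rightarrow> real^'m \<Rightarrow> 'n set \<Rightarrow> (real^'n) set" where
  "first_stage_set A b IX =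
     {x. (\<forall>i. 0 \<le> x$i) \<and> (\<forall>i\<in>IX. x$i \<in> \<int>) \<and> (\<forall>j. (A *v x)$j \<ge> b$j)}"

definition second_stage_set ::
  "real^'k^'r \<Rightarrow> real^'n^'r \<Rightarrow> real^'p^'r \<Rightarrow> real^'r \<Rightarrow> 'k set
    \<Rightarrow> real^'n \<Rightarrow> real^'p \<Rightarrow> (real^'k) set" where
  "second_stage_set B2 B1 E d IY x u =
     {y. (\<forall>i. 0 \<le> y$i) \<and> (\<forall>i\<in>IY. y$i \<in> \<int>) \<and>
         (\<forall>j. (B2 *v y)$j \<ge> (d - B1 *v x - E *v u)$j)}"

text \<open>Objective of the two-stage robust problem for a fixed first-stage decision:
 c1 x + max_{u in U x} min_{y in Y x u} c2 y (inf over empty set = +infinity).\<close>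
definition tsr_obj ::
  "real^'n \<Rightarrow> real^'k \<Rightarrow> (real^'n \<Rightarrow> (real^'p) set)
    \<Rightarrow> (real^'n \<Rightarrow> real^'p \<Rightarrow> (real^'k) set) \<Rightarrow> real^'n \<Rightarrow> ereal" where
  "tsr_obj c1 c2 U Y x =
     ereal (c1 \<bullet> x) + (SUP u\<in>U x. INF y\<in>Y x u. ereal (c2 \<bullet> y))"

definition tsr_val ::
  "(real^'n) set \<Rightarrow> real^'n \<Rightarrow> real^'k \<Rightarrow> (real^'n \<Rightarrow> (real^'p) set)
    \<Rightarrow> (real^'n \<Rightarrow> real^'p \<Rightarrow> (real^'k) set) \<Rightarrow> ereal" where
  "tsr_val X c1 c2 U Y = (INF x\<in>X. tsr_obj c1 c2 U Y x)"

definition tsr_optimal ::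
  "(real^'n) set \<Rightarrow> real^'n \<Rightarrow> real^'k \<Rightarrow> (real^'n \<Rightarrow> (real^'p) set)
    \<Rightarrow> (real^'n \<Rightarrow> real^'p \<Rightarrow> (real^'k) set) \<Rightarrow> real^'n \<Rightarrow> bool" where
  "tsr_optimal X c1 c2 U Y x \<longleftrightarrow> x \<in> X \<and> tsr_obj c1 c2 U Y x = tsr_val X c1 c2 U Y"

definition tsr_equivalent where
  "tsr_equivalent X c1 c2 U Y U' Y' \<longleftrightarrow>
     tsr_val X c1 c2 U Y = tsr_val X c1 c2 U' Y' \<and>
     (\<forall>x. tsr_optimal X c1 c2 U Y x \<longleftrightarrow> tsr_optimal X c1 c2 U' Y' x)"

end

theory Submission
  imports Defs
begin

text \<open>For fixed \<open>x\<close>, the map \<open>u \<mapsto> x\<^sub>l + u \<circ> (x\<^sub>h - x\<^sub>l)\<close> sends the unit box onto the box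
  \<open>U(x) = [x\<^sub>l, x\<^sub>h]\<close> (nonempty, so \<open>x\<^sub>l \<le> x\<^sub>h\<close>; and \<open>x \<ge> 0\<close> makes the sign constraint on \<open>u\<close>
  redundant), and \<open>Y'(x, u)\<close> is \<open>Y\<close> evaluated at the image point. Reparametrising the
  inner max-min by this surjection leaves the objective unchanged at every \<open>x \<in> X\<close>, so both
  problems have the same objective on the same feasible set.\<close>

lemma tsr_equivalentI:
  assumes "\<And>x. x \<in> X \<Longrightarrow> tsr_obj c1 c2 U Y x = tsr_obj c1 c2 U' Y' x"
  shows "tsr_equivalent X c1 c2 U Y U' Y'"
proof -
  have "tsr_val X c1 c2 U Y = tsr_val X c1 c2 U' Y'"
    unfolding tsr_val_def using assms by (intro INF_cong) auto
  then show ?thesis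
    unfolding tsr_equivalent_def tsr_optimal_def using assms by auto
qed

lemma tsr_obj_reparametrize:
  assumes "U x = \<phi> ` U' x" and "\<And>u. u \<in> U' x \<Longrightarrow> Y' x u = Y x (\<phi> u)"
  shows "tsr_obj c1 c2 U Y x = tsr_obj c1 c2 U' Y' x"
  unfolding tsr_obj_def assms(1) by (simp add: image_comp assms(2))

lemma affine_unit_box_image:
  fixes lo hi :: "real^'p"
  assumes "\<And>i. lo$i \<le> hi$i"
  shows "(\<lambda>u. lo + (\<chi> i. u$i * (hi$i - lo$i))) ` {u. \<forall>i. 0 \<le> u$i \<and> u$i \<le> 1}
           = {w. \<forall>i. lo$i \<le> w$i \<and> w$i \<le> hi$i}"
    (is "?\<phi> ` ?B = ?box")
proof
  show "?\<phi> ` ?B \<subseteq> ?box"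
  proof (rule image_subsetI)
    fix u assume u: "u \<in> ?B"
    have "lo$i \<le> ?\<phi> u $ i \<and> ?\<phi> u $ i \<le> hi$i" for i
    proof -
      have "0 \<le> u$i * (hi$i - lo$i)" "u$i * (hi$i - lo$i) \<le> hi$i - lo$i"
        using u assms[of i] by (simp_all add: mult_left_le_one_le)
      then show ?thesis by simp
    qed
    then show "?\<phi> u \<in> ?box" by simp
  qed
next
  show "?box \<subseteq> ?\<phi> ` ?B"
  proof
    fix w assume w: "w \<in> ?box"
    \<comment> \<open>Where \<open>hi$i = lo$i\<close> the quotient is \<open>0\<close> by the convention \<open>a / 0 = 0\<close>, and then \<open>w$i = lo$i\<close>.\<close>
    define u where "u = (\<chi> i. (w$i - lo$i) / (hi$i - lo$i))"
    have "0 \<le> u$i \<and> u$i \<le> 1" for i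
    proof -
      have "lo$i \<le> w$i" "w$i \<le> hi$i" using w by auto
      then show ?thesis by (auto simp: u_def divide_le_eq_1)
    qed
    then have "u \<in> ?B" by simp
    moreover have "w = ?\<phi> u"
    proof (rule vec_eq_iff[THEN iffD2], rule allI)
      fix i
      show "w$i = ?\<phi> u $ i"
      proof (cases "hi$i = lo$i")
        case True
        with w show ?thesis by (simp add: u_def) (metis order_antisym)
      next
        case False
        then show ?thesis by (simp add: u_def)
      qed
    qed
    ultimately show "w \<in> ?\<phi> ` ?B" by blast
  qed
qed

theorem proposition4:
  fixes A :: "real^'n^'m" and b :: "real^'m" and IX :: "'n set"
    and B1 :: "real^'n^'r" and B2 :: "real^'k^'r" and E :: "real^'p^'r" and d :: "real^'r"
    and IY :: "'k set" and c1 :: "real^'n" and c2 :: "real^'k"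
    and l h :: "'p \<Rightarrow> 'n"
  defines "X \<equiv> first_stage_set A b IX"
    and "Y \<equiv> second_stage_set B2 B1 E d IY"
    and "U \<equiv> (\<lambda>x. {u :: real^'p. (\<forall>i. 0 \<le> u$i) \<and> (\<forall>i. x$(l i) \<le> u$i \<and> u$i \<le> x$(h i))})"
    and "U0 \<equiv> (\<lambda>x::real^'n. {u :: real^'p. \<forall>i. 0 \<le> u$i \<and> u$i \<le> 1})"
    and "Y' \<equiv> (\<lambda>x u. second_stage_set B2 B1 E d IY x ((\<chi> i. x$(l i)) + (\<chi> i. u$i * (x$(h i) - x$(l i)))))"
  assumes "inj l" and "inj h"
    and "\<forall>x\<in>X. U x \<noteq> {}"
  shows "tsr_equivalent X c1 c2 U Y U0 Y'"
proof (rule tsr_equivalentI)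
  fix x assume "x \<in> X"
  define lo hi where "lo = (\<chi> i. x$(l i))" and "hi = (\<chi> i. x$(h i))"
  have "\<forall>i. 0 \<le> x$i"
    using \<open>x \<in> X\<close> unfolding X_def first_stage_set_def by auto
  then have "U x = {w. \<forall>i. lo$i \<le> w$i \<and> w$i \<le> hi$i}"
    unfolding U_def lo_def hi_def by (auto intro: order_trans)
  moreover have "\<And>i. lo$i \<le> hi$i"
    using assms(8) \<open>x \<in> X\<close> unfolding U_def lo_def hi_def by (fastforce intro: order_trans)
  ultimately have "U x = (\<lambda>u. lo + (\<chi> i. u$i * (hi$i - lo$i))) ` U0 x"
    unfolding U0_def by (simp add: affine_unit_box_image)
  then show "tsr_obj c1 c2 U Y x = tsr_obj c1 c2 U0 Y' x"
    by (rule tsr_obj_reparametrize) (simp add: Y_def Y'_def lo_def hi_def)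
qed

end
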